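(* A pointed connected graph $(g,v_0)\in\mathscr G_c^\bullet[U]$ is a prime structure of the set operad $\mathscr G_c^\bullet$ if and only if the graph $g$ is nonseparable, i.e. has no cutpoint.
   Context: $\mathscr G_c^\bullet[U]$ is the set of pairs $(g,v)$, where $g$ is a simple connected graph on vertex set $U$ and $v\in U$. It is a set operad with the following product. For an assembly $\{(g_B,v_B)\}_{B\in\pi}$ and an outer structure $(g'_\pi,B_0)$ (a connected graph on $\pi$ with distinguished block $B_0$), the product is $(g,v_{B_0})$. Here $g$ has all edges of the $g_B$, plus the edge $\{v_B,v_{B'}\}$ for each edge $\{B,B'\}$ of $g'_\pi$. A structure $m\in M[U]$ of a set operad $(M,\eta)$ is prime if whenever $m=\eta(a,m')$ then either $a$ is the assembly of singleton structures (and $m'$ is isomorphic to $m$), or $a=\{m\}$ (and $m'$ is the singleton structure on $\{U\}$). A cutpoint of a connected graph $g$ is a vertex whose deletion disconnects $g$. *)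

theory Defs
  imports Main "HOL-Library.Disjoint_Sets"
begin

definition simple_graph :: "'a set \<Rightarrow> 'a set set \<Rightarrow> bool" where
  "simple_graph U E \<longleftrightarrow> (\<forall>e\<in>E. \<exists>x y. x \<in> U \<and> y \<in> U \<and> x \<noteq> y \<and> e = {x, y})"

definition adj :: "'a set set \<Rightarrow> ('a \<times> 'a) set" where
  "adj E = {(x, y). {x, y} \<in> E}"

definition reach :: "'a set set \<Rightarrow> 'a \<Rightarrow> 'a \<Rightarrow> bool" where
  "reach E x y \<longleftrightarrow> (x, y) \<in> (adj E)\<^sup>*"

definition connected_graph :: "'a set \<Rightarrow> 'a set set \<Rightarrow> bool" where
  "connected_graph U E \<longleftrightarrow> simple_graph U E \<and> (\<forall>x\<in>U. \<forall>y\<in>U. reach E x y)"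

definition Gc_pt :: "'a set \<Rightarrow> 'a set set \<times> 'a \<Rightarrow> bool" where
  "Gc_pt U m \<longleftrightarrow> finite U \<and> connected_graph U (fst m) \<and> snd m \<in> U"

definition Gc_prod :: "'a set set \<Rightarrow> ('a set \<Rightarrow> 'a set set \<times> 'a)
    \<Rightarrow> 'a set set set \<times> 'a set \<Rightarrow> 'a set set \<times> 'a" where
  "Gc_prod \<pi> a m' =
     ((\<Union>B\<in>\<pi>. fst (a B)) \<union> {{snd (a B), snd (a B')} | B B'. {B, B'} \<in> fst m'},
      snd (a (snd m')))"

definition Gc_prime :: "'a set \<Rightarrow> 'a set set \<times> 'a \<Rightarrow> bool" where
  "Gc_prime U m \<longleftrightarrow>
     (\<forall>\<pi> a m'. partition_on U \<pi> \<and> (\<forall>B\<in>\<pi>. Gc_pt B (a B)) \<and> Gc_pt \<pi> m'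
        \<and> m = Gc_prod \<pi> a m' \<longrightarrow> \<pi> = {{x} | x. x \<in> U} \<or> \<pi> = {U})"

definition cutpoint :: "'a set \<Rightarrow> 'a set set \<Rightarrow> 'a \<Rightarrow> bool" where
  "cutpoint U E c \<longleftrightarrow> c \<in> U \<and>
     (\<exists>x\<in>U - {c}. \<exists>y\<in>U - {c}. \<not> reach {e\<in>E. c \<notin> e} x y)"

end

theory Submission
  imports Defs
begin

text \<open>If (g, v0) is a nontrivial product, some block B contains a vertex other than
  its root c and some vertex lies outside B. Edges of g inside blocks stay inside, and
  edges between blocks join roots, so every edge leaving B starts at c: deleting c
  separates the two vertices, and c is a cutpoint. Conversely, given a cutpoint c, let
  C be a component of g - c that does not contain v0. Then B = C \<union> {c} meets the rest
  of g only in c, and the partition into B and singletons, with B rooted at c and the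
  contracted graph outside, is a nontrivial decomposition of (g, v0).\<close>

lemma reach_refl [simp]: "reach E x x"
  by (simp add: reach_def)

lemma reach_edge: "{x, y} \<in> E \<Longrightarrow> reach E x y"
  by (auto simp: reach_def adj_def)

lemma reach_trans: "reach E x y \<Longrightarrow> reach E y z \<Longrightarrow> reach E x z"
  by (auto simp: reach_def)

lemma reach_sym: "reach E x y \<Longrightarrow> reach E y x"
proof -
  have "sym (adj E)"
    by (rule symI) (auto simp: adj_def insert_commute)
  then show "reach E x y \<Longrightarrow> reach E y x"
    unfolding reach_def by (meson sym_rtrancl symD)
qed

lemma reach_mono: "E \<subseteq> E' \<Longrightarrow> reach E x y \<Longrightarrow> reach E' x y"
  unfolding reach_def adj_def by (erule rtrancl_mono[THEN subsetD, rotated]) auto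

lemma reach_induct [consumes 1, case_names refl edge]:
  assumes "reach E x y"
    and "P x"
    and "\<And>y z. reach E x y \<Longrightarrow> {y, z} \<in> E \<Longrightarrow> P y \<Longrightarrow> P z"
  shows "P y"
  using assms unfolding reach_def
  by (induction rule: rtrancl_induct) (auto simp: adj_def)

lemma reach_in_closed_set:
  assumes closed: "\<And>p q. {p, q} \<in> E \<Longrightarrow> p \<in> S \<Longrightarrow> q \<in> S"
    and "x \<in> S" and "reach E x y"
  shows "y \<in> S \<and> reach {e \<in> E. e \<subseteq> S} x y"
  using \<open>reach E x y\<close>
proof (induction rule: reach_induct)
  case refl
  then show ?case using \<open>x \<in> S\<close> by simp
next
  case (edge y z)
  then have "z \<in> S" using closed by blast
  with edge have "reach {e \<in> E. e \<subseteq> S} y z" by (intro reach_edge) auto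
  with edge show ?case using \<open>z \<in> S\<close> by (blast intro: reach_trans)
qed

lemma reach_leaves_set:
  assumes "reach E x y" "x \<in> S" "y \<notin> S"
  obtains p q where "{p, q} \<in> E" "p \<in> S" "q \<notin> S"
  using reach_in_closed_set[of E S x y] assms by blast

lemma reach_map:
  assumes "\<And>p q. {p, q} \<in> E \<Longrightarrow> f p = f q \<or> {f p, f q} \<in> E'" and "reach E x y"
  shows "reach E' (f x) (f y)"
  using \<open>reach E x y\<close>
proof (induction rule: reach_induct)
  case (edge y z)
  then have "reach E' (f y) (f z)" using assms(1) reach_edge by fastforce
  with edge show ?case by (blast intro: reach_trans)
qed simp

lemma reach_avoiding_to_vertex: "reach {e \<in> E. c \<notin> e} z c \<Longrightarrow> z = c"
  unfolding reach_def by (erule rtranclE) (auto simp: adj_def)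

lemma simple_graph_edgeD:
  "simple_graph U E \<Longrightarrow> {p, q} \<in> E \<Longrightarrow> p \<in> U \<and> q \<in> U \<and> p \<noteq> q"
  unfolding simple_graph_def by (metis doubleton_eq_iff)

lemma simple_graph_induced:
  assumes "simple_graph U E"
  shows "simple_graph S {e \<in> E. e \<subseteq> S}"
  unfolding simple_graph_def
proof
  fix e assume e: "e \<in> {e \<in> E. e \<subseteq> S}"
  then have "e \<in> E" by simp
  then obtain x y where "x \<noteq> y" "e = {x, y}"
    using assms unfolding simple_graph_def by meson
  with e show "\<exists>x y. x \<in> S \<and> y \<in> S \<and> x \<noteq> y \<and> e = {x, y}" by auto
qed

lemma connected_graph_if_reach_from:
  assumes "simple_graph U E" "z \<in> U" "\<And>u. u \<in> U \<Longrightarrow> reach E z u"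
  shows "connected_graph U E"
  using assms unfolding connected_graph_def by (blast intro: reach_trans reach_sym)

lemma connected_graph_singleton: "connected_graph {p} {}"
  by (simp add: connected_graph_def simple_graph_def)

lemma partition_on_block_unique:
  "partition_on U \<pi> \<Longrightarrow> B \<in> \<pi> \<Longrightarrow> B' \<in> \<pi> \<Longrightarrow> x \<in> B \<Longrightarrow> x \<in> B' \<Longrightarrow> B = B'"
  unfolding partition_on_def disjoint_def by blast

lemma Gc_prod_edge_leaving_block:
  assumes \<pi>: "partition_on U \<pi>" and a: "\<forall>B\<in>\<pi>. Gc_pt B (a B)" and m': "Gc_pt \<pi> m'"
    and e: "{p, q} \<in> fst (Gc_prod \<pi> a m')" and "B \<in> \<pi>" "p \<in> B" "q \<notin> B"
  shows "p = snd (a B)"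
proof -
  have root_in: "snd (a X) \<in> X" if "X \<in> \<pi>" for X
    using a that by (simp add: Gc_pt_def)
  consider (inner) X where "X \<in> \<pi>" "{p, q} \<in> fst (a X)"
    | (outer) X Y where "{X, Y} \<in> fst m'" "{p, q} = {snd (a X), snd (a Y)}"
    using e by (auto simp: Gc_prod_def)
  then show ?thesis
  proof cases
    case inner
    then have "p \<in> X" "q \<in> X"
      using a simple_graph_edgeD by (fastforce simp: Gc_pt_def connected_graph_def)+
    then show ?thesis
      using partition_on_block_unique[OF \<pi>] inner \<open>B \<in> \<pi>\<close> \<open>p \<in> B\<close> \<open>q \<notin> B\<close> by metis
  next
    case outer
    have "X \<in> \<pi>" "Y \<in> \<pi>"
      using m' outer(1) simple_graph_edgeD by (fastforce simp: Gc_pt_def connected_graph_def)+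
    moreover have "p = snd (a X) \<or> p = snd (a Y)"
      using outer(2) by (auto simp: doubleton_eq_iff)
    ultimately show ?thesis
      using partition_on_block_unique[OF \<pi>] root_in \<open>B \<in> \<pi>\<close> \<open>p \<in> B\<close> by metis
  qed
qed

lemma nontrivial_partition_witness:
  assumes \<pi>: "partition_on U \<pi>" and r: "\<And>B. B \<in> \<pi> \<Longrightarrow> r B \<in> B"
    and "\<pi> \<noteq> {{x} | x. x \<in> U}" and "\<pi> \<noteq> {U}"
  obtains B x y where "B \<in> \<pi>" "x \<in> B" "x \<noteq> r B" "y \<in> U - B"
proof -
  have U: "U = \<Union>\<pi>" using \<pi> partition_onD1 by blast
  obtain B x where B: "B \<in> \<pi>" "x \<in> B" "x \<noteq> r B"
  proof (rule ccontr)
    assume "\<not> thesis"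
    with that have singleton: "X = {r X}" if "X \<in> \<pi>" for X
      using r that by blast
    have "\<pi> = {{x} | x. x \<in> U}"
    proof (intro equalityI subsetI)
      fix X assume "X \<in> \<pi>"
      then show "X \<in> {{x} | x. x \<in> U}" using singleton r U by blast
    next
      fix X assume "X \<in> {{x} | x. x \<in> U}"
      then obtain x Y where "X = {x}" "x \<in> Y" "Y \<in> \<pi>" using U by blast
      then show "X \<in> \<pi>" using singleton by (metis singletonD)
    qed
    with assms(3) show False ..
  qed
  moreover obtain y where "y \<in> U - B"
  proof (rule ccontr)
    assume "\<not> thesis"
    with that U B(1) have "B = U" by blast
    have "X = B" if X: "X \<in> \<pi>" for X
    proof -
      obtain x where "x \<in> X" using X partition_onD3[OF \<pi>] by (metis all_not_in_conv)
      then show "X = B"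
        using partition_on_block_unique[OF \<pi> X B(1)] \<open>B = U\<close> U X by blast
    qed
    then have "\<pi> = {U}" using B(1) \<open>B = U\<close> by blast
    with assms(4) show False ..
  qed
  ultimately show thesis using that by blast
qed

lemma Gc_prime_if_no_cutpoint:
  assumes "\<not> (\<exists>c. cutpoint U g c)"
  shows "Gc_prime U (g, v0)"
  unfolding Gc_prime_def
proof (intro allI impI)
  fix \<pi> a m'
  assume "partition_on U \<pi> \<and> (\<forall>B\<in>\<pi>. Gc_pt B (a B)) \<and> Gc_pt \<pi> m' \<and> (g, v0) = Gc_prod \<pi> a m'"
  then have \<pi>: "partition_on U \<pi>" and a: "\<forall>B\<in>\<pi>. Gc_pt B (a B)" and m': "Gc_pt \<pi> m'"
    and g: "g = fst (Gc_prod \<pi> a m')"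
    by (auto simp: prod_eq_iff)
  have root_in: "snd (a B) \<in> B" if "B \<in> \<pi>" for B
    using a that by (simp add: Gc_pt_def)
  show "\<pi> = {{x} | x. x \<in> U} \<or> \<pi> = {U}"
  proof (rule ccontr)
    assume "\<not> ?thesis"
    then obtain B x y where B: "B \<in> \<pi>" "x \<in> B" "x \<noteq> snd (a B)" "y \<in> U - B"
      using nontrivial_partition_witness[OF \<pi> root_in] by blast
    define c where "c = snd (a B)"
    have "q \<in> B" if "{p, q} \<in> {e \<in> g. c \<notin> e}" "p \<in> B" for p q
      using Gc_prod_edge_leaving_block[OF \<pi> a m', of p q B] that B(1) g c_def by auto
    then have "\<not> reach {e \<in> g. c \<notin> e} x y"
      using reach_in_closed_set[of "{e \<in> g. c \<notin> e}" B x y] B by blast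
    moreover have "c \<in> U" "x \<in> U"
      using root_in B partition_onD1[OF \<pi>] c_def by auto
    ultimately have "cutpoint U g c"
      using B c_def unfolding cutpoint_def by (metis Diff_iff root_in singletonD)
    with assms show False by blast
  qed
qed

text \<open>A block B that meets the rest of g only in c: contracting it yields a decomposition
  of (g, v0) into B, rooted at c, and the singletons outside B.\<close>
locale hanging_block =
  fixes U :: "'a set" and g :: "'a set set" and v0 :: 'a and B :: "'a set" and c :: 'a
  assumes pointed: "Gc_pt U (g, v0)"
    and c_in_B: "c \<in> B" and B_subset: "B \<subseteq> U"
    and B_connected: "connected_graph B {e \<in> g. e \<subseteq> B}"
    and leaving_edge: "\<And>p q. {p, q} \<in> g \<Longrightarrow> p \<in> B \<Longrightarrow> q \<notin> B \<Longrightarrow> p = c"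
    and root_outside: "v0 \<in> B \<Longrightarrow> v0 = c"
begin

definition blk :: "'a \<Rightarrow> 'a set" where
  "blk p = (if p \<in> B then B else {p})"

definition blocks :: "'a set set" where
  "blocks = blk ` U"

definition assembly :: "'a set \<Rightarrow> 'a set set \<times> 'a" where
  "assembly X = (if X = B then ({e \<in> g. e \<subseteq> B}, c) else ({}, the_elem X))"

definition contracted :: "'a set set set" where
  "contracted = {{blk p, blk q} | p q. {p, q} \<in> g \<and> blk p \<noteq> blk q}"

lemma simple: "simple_graph U g"
  using pointed by (simp add: Gc_pt_def connected_graph_def)

lemma blocks_partition: "partition_on U blocks"
proof (rule partition_onI)
  show "\<Union> blocks = U" using B_subset by (auto simp: blocks_def blk_def)
  show "{} \<notin> blocks" using c_in_B by (auto simp: blocks_def blk_def)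
  show "disjnt X Y" if "X \<in> blocks" "Y \<in> blocks" "X \<noteq> Y" for X Y
    using that by (auto simp: blocks_def blk_def disjnt_def)
qed

lemma B_in_blocks: "B \<in> blocks"
  using c_in_B B_subset by (force simp: blocks_def blk_def)

lemma root_blk: "snd (assembly (blk p)) = (if p \<in> B then c else p)"
  by (auto simp: assembly_def blk_def)

lemma assembly_pointed: "X \<in> blocks \<Longrightarrow> Gc_pt X (assembly X)"
proof (clarsimp simp: blocks_def)
  fix p assume "p \<in> U"
  show "Gc_pt (blk p) (assembly (blk p))"
  proof (cases "p \<in> B")
    case True
    have "finite B" using pointed B_subset finite_subset by (auto simp: Gc_pt_def)
    with True show ?thesis
      using B_connected c_in_B by (simp add: Gc_pt_def blk_def assembly_def)
  next
    case False
    then have "{p} \<noteq> B" by blast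
    with False show ?thesis
      using connected_graph_singleton by (simp add: Gc_pt_def blk_def assembly_def)
  qed
qed

lemma contracted_pointed: "Gc_pt blocks (contracted, blk v0)"
proof -
  have "simple_graph blocks contracted"
    using simple_graph_edgeD[OF simple]
    unfolding simple_graph_def contracted_def blocks_def by blast
  moreover have "reach contracted X Y" if XY: "X \<in> blocks" "Y \<in> blocks" for X Y
  proof -
    obtain p q where "p \<in> U" "q \<in> U" "X = blk p" "Y = blk q"
      using XY unfolding blocks_def by blast
    moreover have "reach g p q"
      using pointed \<open>p \<in> U\<close> \<open>q \<in> U\<close> by (simp add: Gc_pt_def connected_graph_def)
    then have "reach contracted (blk p) (blk q)"
      by (rule reach_map[rotated]) (auto simp: contracted_def)
    ultimately show ?thesis by simp
  qed
  ultimately show ?thesis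
    using pointed by (auto simp: Gc_pt_def connected_graph_def blocks_def)
qed

lemma edge_between_roots:
  assumes "{p, q} \<in> g" "\<not> (p \<in> B \<and> q \<in> B)"
  shows "{snd (assembly (blk p)), snd (assembly (blk q))} = {p, q}"
  using assms leaving_edge[of p q] leaving_edge[of q p]
  by (auto simp: root_blk insert_commute)

lemma contracted_edgeE:
  assumes "{X, Y} \<in> contracted"
  obtains p q where "X = blk p" "Y = blk q" "{p, q} \<in> g" "blk p \<noteq> blk q"
proof -
  have "\<exists>p q. {X, Y} = {blk p, blk q} \<and> {p, q} \<in> g \<and> blk p \<noteq> blk q"
    using assms unfolding contracted_def mem_Collect_eq .
  then obtain p q where pq: "{X, Y} = {blk p, blk q}" "{p, q} \<in> g" "blk p \<noteq> blk q"
    by (elim exE conjE)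
  have "{q, p} \<in> g" using pq(2) by (simp add: insert_commute)
  moreover have "X = blk p \<and> Y = blk q \<or> X = blk q \<and> Y = blk p"
    using pq(1) by (simp add: doubleton_eq_iff)
  ultimately show thesis using that pq(2,3) by metis
qed

lemma root_edges_contracted:
  "{{snd (assembly X), snd (assembly Y)} | X Y. {X, Y} \<in> contracted}
    = {{p, q} | p q. {p, q} \<in> g \<and> \<not> (p \<in> B \<and> q \<in> B)}"
proof (intro equalityI subsetI)
  fix e assume "e \<in> {{snd (assembly X), snd (assembly Y)} | X Y. {X, Y} \<in> contracted}"
  then obtain X Y where e: "e = {snd (assembly X), snd (assembly Y)}" "{X, Y} \<in> contracted"
    by blast
  obtain p q where pq: "X = blk p" "Y = blk q" "{p, q} \<in> g" "blk p \<noteq> blk q"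
    using e(2) by (rule contracted_edgeE)
  then have outside: "\<not> (p \<in> B \<and> q \<in> B)" by (auto simp: blk_def)
  then have "e = {p, q}"
    using e(1) pq(1,2) edge_between_roots[OF pq(3)] by simp
  then show "e \<in> {{p, q} | p q. {p, q} \<in> g \<and> \<not> (p \<in> B \<and> q \<in> B)}"
    using pq(3) outside by blast
next
  fix e assume "e \<in> {{p, q} | p q. {p, q} \<in> g \<and> \<not> (p \<in> B \<and> q \<in> B)}"
  then obtain p q where pq: "e = {p, q}" "{p, q} \<in> g" "\<not> (p \<in> B \<and> q \<in> B)" by blast
  moreover have "p \<noteq> q" using simple_graph_edgeD[OF simple pq(2)] by blast
  ultimately have "blk p \<noteq> blk q" by (auto simp: blk_def)
  with pq have "{blk p, blk q} \<in> contracted" unfolding contracted_def by blast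
  moreover have "e = {snd (assembly (blk p)), snd (assembly (blk q))}"
    using edge_between_roots[OF pq(2,3)] pq(1) by simp
  ultimately show "e \<in> {{snd (assembly X), snd (assembly Y)} | X Y. {X, Y} \<in> contracted}"
    by blast
qed

lemma Gc_prod_contracted: "(g, v0) = Gc_prod blocks assembly (contracted, blk v0)"
proof -
  have inner: "(\<Union>X\<in>blocks. fst (assembly X)) = {e \<in> g. e \<subseteq> B}"
    using B_in_blocks by (auto simp: assembly_def split: if_splits)
  have "g = {e \<in> g. e \<subseteq> B} \<union> {{p, q} | p q. {p, q} \<in> g \<and> \<not> (p \<in> B \<and> q \<in> B)}"
  proof (intro equalityI subsetI)
    fix e assume "e \<in> g"
    moreover obtain p q where "e = {p, q}"
      using simple \<open>e \<in> g\<close> unfolding simple_graph_def by blast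
    ultimately show "e \<in> {e \<in> g. e \<subseteq> B} \<union> {{p, q} | p q. {p, q} \<in> g \<and> \<not> (p \<in> B \<and> q \<in> B)}"
      by blast
  qed blast
  also have "\<dots> = fst (Gc_prod blocks assembly (contracted, blk v0))"
    by (simp add: Gc_prod_def inner root_edges_contracted)
  moreover have "v0 = snd (Gc_prod blocks assembly (contracted, blk v0))"
    using root_outside by (simp add: Gc_prod_def root_blk)
  ultimately show ?thesis
    by (metis prod.collapse)
qed

lemma not_Gc_prime:
  assumes "B \<noteq> U" and "\<exists>u\<in>B. u \<noteq> c"
  shows "\<not> Gc_prime U (g, v0)"
proof -
  have "blocks \<noteq> {{x} | x. x \<in> U}"
    using B_in_blocks assms(2) c_in_B by auto
  moreover have "blocks \<noteq> {U}"
    using B_in_blocks assms(1) by auto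
  ultimately show ?thesis
    unfolding Gc_prime_def
    using blocks_partition assembly_pointed contracted_pointed Gc_prod_contracted by blast
qed

end

lemma cutpoint_separates_from:
  assumes "cutpoint U g c" "v \<in> U"
  obtains z w where "z \<in> U - {c}" "w \<in> U - {c}"
    "\<not> reach {e \<in> g. c \<notin> e} z w" "\<not> reach {e \<in> g. c \<notin> e} z v"
proof -
  obtain x y where xy: "x \<in> U - {c}" "y \<in> U - {c}" "\<not> reach {e \<in> g. c \<notin> e} x y"
    using assms(1) unfolding cutpoint_def by blast
  \<comment> \<open>v cannot be reachable from both x and y\<close>
  show thesis
  proof (cases "reach {e \<in> g. c \<notin> e} x v")
    case True
    then have "\<not> reach {e \<in> g. c \<notin> e} y v"
      using xy(3) by (meson reach_sym reach_trans)
    moreover have "\<not> reach {e \<in> g. c \<notin> e} y x"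
      using xy(3) by (meson reach_sym)
    ultimately show thesis using that xy(1,2) by blast
  next
    case False
    then show thesis using that xy by blast
  qed
qed

lemma cutpoint_hanging_block:
  assumes pointed: "Gc_pt U (g, v0)" and "cutpoint U g c"
  obtains B where "hanging_block U g v0 B c" "B \<noteq> U" "\<exists>u\<in>B. u \<noteq> c"
proof -
  let ?E = "{e \<in> g. c \<notin> e}"
  have simple: "simple_graph U g" and connected: "\<And>p q. p \<in> U \<Longrightarrow> q \<in> U \<Longrightarrow> reach g p q"
    using pointed by (auto simp: Gc_pt_def connected_graph_def)
  have "c \<in> U" "v0 \<in> U" using assms by (auto simp: cutpoint_def Gc_pt_def)
  obtain z w where zw: "z \<in> U - {c}" "w \<in> U - {c}" "\<not> reach ?E z w" "\<not> reach ?E z v0"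
    using cutpoint_separates_from[OF \<open>cutpoint U g c\<close> \<open>v0 \<in> U\<close>] by blast
  define C where "C = {u \<in> U. reach ?E z u}"
  define B where "B = insert c C"
  have "z \<in> C" using zw(1) by (simp add: C_def)
  have "c \<notin> C" using zw(1) reach_avoiding_to_vertex by (fastforce simp: C_def)
  have exit_at_c: "q = c" if "{p, q} \<in> g" "p \<in> C" "q \<notin> C" for p q
  proof (rule ccontr)
    assume "q \<noteq> c"
    with that \<open>c \<notin> C\<close> have "reach ?E p q" by (intro reach_edge) auto
    with that simple_graph_edgeD[OF simple] show False
      by (auto simp: C_def intro: reach_trans)
  qed
  have reach_C: "reach {e \<in> g. e \<subseteq> B} z u" if "u \<in> C" for u
  proof -
    have "reach {e \<in> ?E. e \<subseteq> C} z u"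
      using reach_in_closed_set[of ?E C z u] exit_at_c that \<open>z \<in> C\<close> by (auto simp: C_def)
    then show ?thesis by (rule reach_mono[rotated]) (auto simp: B_def)
  qed
  have reach_c: "reach {e \<in> g. e \<subseteq> B} z c"
  proof -
    have "w \<notin> C" using zw(3) by (simp add: C_def)
    with connected[of z w] zw \<open>z \<in> C\<close> obtain p q where "{p, q} \<in> g" "p \<in> C" "q \<notin> C"
      by (auto elim: reach_leaves_set)
    moreover from this have "q = c" by (rule exit_at_c)
    ultimately have "reach {e \<in> g. e \<subseteq> B} p c" by (intro reach_edge) (auto simp: B_def)
    with reach_C \<open>p \<in> C\<close> show ?thesis by (blast intro: reach_trans)
  qed
  have "connected_graph B {e \<in> g. e \<subseteq> B}"
  proof (rule connected_graph_if_reach_from)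
    show "simple_graph B {e \<in> g. e \<subseteq> B}" by (rule simple_graph_induced[OF simple])
    show "z \<in> B" using \<open>z \<in> C\<close> by (simp add: B_def)
    show "reach {e \<in> g. e \<subseteq> B} z u" if "u \<in> B" for u
      using that reach_C reach_c by (auto simp: B_def)
  qed
  moreover have "p = c" if "{p, q} \<in> g" "p \<in> B" "q \<notin> B" for p q
    using exit_at_c[of p q] that by (auto simp: B_def)
  moreover have "v0 \<in> B \<Longrightarrow> v0 = c"
    using zw(4) by (simp add: B_def C_def)
  moreover have "c \<in> B" "B \<subseteq> U"
    using \<open>c \<in> U\<close> by (auto simp: B_def C_def)
  ultimately have "hanging_block U g v0 B c"
    using pointed by unfold_locales
  moreover have "B \<noteq> U" "z \<in> B" "z \<noteq> c"
    using zw by (auto simp: B_def C_def)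
  ultimately show thesis by (intro that) auto
qed

theorem mainTheorem9:
  fixes U :: "'a set" and g :: "'a set set" and v0 :: 'a
  assumes "Gc_pt U (g, v0)"
  shows "Gc_prime U (g, v0) \<longleftrightarrow> \<not> (\<exists>c. cutpoint U g c)"
proof
  assume "Gc_prime U (g, v0)"
  show "\<not> (\<exists>c. cutpoint U g c)"
  proof
    assume "\<exists>c. cutpoint U g c"
    then obtain c where "cutpoint U g c" ..
    then obtain B where "hanging_block U g v0 B c" "B \<noteq> U" "\<exists>u\<in>B. u \<noteq> c"
      by (rule cutpoint_hanging_block[OF assms])
    then have "\<not> Gc_prime U (g, v0)" by (rule hanging_block.not_Gc_prime)
    then show False using \<open>Gc_prime U (g, v0)\<close> by contradiction
  qed
qed (rule Gc_prime_if_no_cutpoint)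

end
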